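(* Let $G$ be a subgroup of $S_n$, $\chi$ a character of $G$, $\theta,\tau\in S_n$ and $a,b\in\mathbb{C}$. Then $$d_\chi^G(aP_\theta+bP_\tau)=(a+b)^F\sum_{\sigma\in X(\theta,\tau)\cap G}\overline{\chi(\sigma)}\,a^{\,n-t_\sigma-F}\,b^{\,t_\sigma},$$ where $t_\sigma=n-|\operatorname{Fix}(\theta^{-1}\sigma)|$ and $F=|\operatorname{Fix}(\theta^{-1}\tau)|$.
   Context: $S_n$ is the symmetric group on $[n]=\{1,\dots,n\}$. A character $\chi$ of $G$ is $\chi(g)=\operatorname{tr}\rho(g)$ for a representation $\rho:G\to GL(V)$ on a finite-dimensional complex vector space. The generalized matrix function is $d_\chi^G(A)=\sum_{\sigma\in G}\chi(\sigma)\prod_{i=1}^n A_{i\,\sigma(i)}$ for $A\in M_n(\mathbb{C})$. For $\theta\in S_n$, the permutation matrix $P_\theta$ has $(P_\theta)_{ij}=1$ if $\theta^{-1}(i)=j$ and $0$ otherwise. $\operatorname{Fix}(\pi)$ is the set of fixed points of $\pi$. $X(\theta,\tau)=\{\sigma\in S_n \mid \text{for each } i\in[n],\ \sigma(i)=\theta(i)\text{ or }\sigma(i)=\tau(i)\}$. *)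

theory Defs
  imports "HOL-Combinatorics.Permutations" "Jordan_Normal_Form.Matrix"
begin

definition is_perm_subgroup :: "nat \<Rightarrow> (nat \<Rightarrow> nat) set \<Rightarrow> bool" where
  "is_perm_subgroup n G \<longleftrightarrow>
     G \<subseteq> {\<sigma>. \<sigma> permutes {1..n}} \<and> id \<in> G \<and>
     (\<forall>g\<in>G. \<forall>h\<in>G. g \<circ> h \<in> G) \<and> (\<forall>g\<in>G. Hilbert_Choice.inv g \<in> G)"

definition mat_trace :: "complex mat \<Rightarrow> complex" where
  "mat_trace M = (\<Sum>i<dim_row M. M $$ (i, i))"

definition is_character :: "(nat \<Rightarrow> nat) set \<Rightarrow> ((nat \<Rightarrow> nat) \<Rightarrow> complex) \<Rightarrow> bool" where
  "is_character G \<chi> \<longleftrightarrow>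
     (\<exists>(d::nat) (\<rho>::(nat \<Rightarrow> nat) \<Rightarrow> complex mat).
        (\<forall>g\<in>G. \<rho> g \<in> carrier_mat d d) \<and>
        \<rho> id = 1\<^sub>m d \<and>
        (\<forall>g\<in>G. \<forall>h\<in>G. \<rho> (g \<circ> h) = \<rho> g * \<rho> h) \<and>
        (\<forall>g\<in>G. \<chi> g = mat_trace (\<rho> g)))"

text \<open>Generalized matrix function; matrices are indexed by {1..n}.\<close>
definition gen_matrix_fun :: "nat \<Rightarrow> (nat \<Rightarrow> nat) set \<Rightarrow> ((nat \<Rightarrow> nat) \<Rightarrow> complex)
    \<Rightarrow> (nat \<Rightarrow> nat \<Rightarrow> complex) \<Rightarrow> complex" where
  "gen_matrix_fun n G \<chi> A = (\<Sum>\<sigma>\<in>G. \<chi> \<sigma> * (\<Prod>i\<in>{1..n}. A i (\<sigma> i)))"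

definition perm_mat :: "(nat \<Rightarrow> nat) \<Rightarrow> nat \<Rightarrow> nat \<Rightarrow> complex" where
  "perm_mat \<theta> i j = (if Hilbert_Choice.inv \<theta> i = j then 1 else 0)"

definition Fix :: "nat \<Rightarrow> (nat \<Rightarrow> nat) \<Rightarrow> nat set" where
  "Fix n \<pi> = {i \<in> {1..n}. \<pi> i = i}"

definition Xset :: "nat \<Rightarrow> (nat \<Rightarrow> nat) \<Rightarrow> (nat \<Rightarrow> nat) \<Rightarrow> (nat \<Rightarrow> nat) set" where
  "Xset n \<theta> \<tau> = {\<sigma>. \<sigma> permutes {1..n} \<and> (\<forall>i\<in>{1..n}. \<sigma> i = \<theta> i \<or> \<sigma> i = \<tau> i)}"

end

(* Substituting sigma by its inverse in the defining sum and using
   chi (inv sigma) = cnj (chi sigma), the term of sigma becomes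
   cnj (chi sigma) * prod_j (a [sigma j = theta j] + b [sigma j = tau j]).
   The conjugation identity holds because rho sigma has finite order, so its
   eigenvalues are roots of unity.  The product vanishes
   unless sigma lies in X(theta, tau); otherwise the positions where theta and tau agree
   contribute a + b, the other positions where sigma follows theta contribute a,
   and the remaining ones b. *)

theory Submission
  imports Defs "HOL-Combinatorics.Cycles" "Jordan_Normal_Form.Jordan_Normal_Form_Existence"
begin

lemma mat_trace_mult_comm:
  fixes A B :: "complex mat"
  assumes A: "A \<in> carrier_mat d d" and B: "B \<in> carrier_mat d d"
  shows "mat_trace (A * B) = mat_trace (B * A)"
proof -
  have expand: "mat_trace (X * Y) = (\<Sum>i<d. \<Sum>j<d. X $$ (i,j) * Y $$ (j,i))"
    if "X \<in> carrier_mat d d" "Y \<in> carrier_mat d d" for X Y :: "complex mat"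
    using that by (simp add: mat_trace_def scalar_prod_def atLeast0LessThan)
  show ?thesis
    unfolding expand[OF A B] expand[OF B A]
    by (subst sum.swap) (simp add: mult.commute)
qed

lemma mat_trace_similar_mat_wit:
  fixes A B :: "complex mat"
  assumes "similar_mat_wit A B P Q"
  shows "mat_trace A = mat_trace B"
proof -
  from similar_mat_witD[OF refl assms] obtain d where
    B: "B \<in> carrier_mat d d" and P: "P \<in> carrier_mat d d" and Q: "Q \<in> carrier_mat d d"
    and QP: "Q * P = 1\<^sub>m d" and A: "A = P * B * Q" by blast
  have "mat_trace (P * B * Q) = mat_trace (Q * (P * B))"
    using B P Q by (intro mat_trace_mult_comm) auto
  also have "Q * (P * B) = B"
    using B P Q QP by (simp add: assoc_mult_mat[symmetric])
  finally show ?thesis using A by simp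
qed

lemma upper_triangular_mult:
  fixes A B :: "'a::comm_semiring_1 mat"
  assumes "A \<in> carrier_mat d d" "B \<in> carrier_mat d d" "upper_triangular A" "upper_triangular B"
  shows "upper_triangular (A * B)"
proof
  fix i j assume ij: "j < i" "i < dim_row (A * B)"
  have "A $$ (i,l) * B $$ (l,j) = 0" if "l < d" for l
    using assms ij that by (cases "l < i") (auto simp: upper_triangular_def)
  then show "(A * B) $$ (i,j) = 0"
    using assms ij by (simp add: scalar_prod_def atLeast0LessThan)
qed

lemma upper_triangular_mult_diag:
  fixes A B :: "'a::comm_semiring_1 mat"
  assumes A: "A \<in> carrier_mat d d" and B: "B \<in> carrier_mat d d"
    and "upper_triangular A" "upper_triangular B" and i: "i < d"
  shows "(A * B) $$ (i,i) = A $$ (i,i) * B $$ (i,i)"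
proof -
  have "A $$ (i,l) * B $$ (l,i) = 0" if "l \<in> {..<d} - {i}" for l
    using assms that by (cases "l < i") (auto simp: upper_triangular_def)
  then have "(\<Sum>l<d. A $$ (i,l) * B $$ (l,i)) = A $$ (i,i) * B $$ (i,i)"
    using i by (subst sum.remove[of _ i]) auto
  then show ?thesis
    using A B i by (simp add: scalar_prod_def atLeast0LessThan)
qed

lemma upper_triangular_pow:
  fixes J :: "'a::comm_semiring_1 mat"
  assumes J: "J \<in> carrier_mat d d" and "upper_triangular J"
  shows "upper_triangular (J ^\<^sub>m k) \<and> (\<forall>i<d. (J ^\<^sub>m k) $$ (i,i) = J $$ (i,i) ^ k)"
proof (induction k)
  case 0
  show ?case using J by auto
next
  case (Suc k)
  have Jk: "J ^\<^sub>m k \<in> carrier_mat d d" using J by simp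
  show ?case
    using Suc upper_triangular_mult[OF Jk J _ assms(2)]
      upper_triangular_mult_diag[OF Jk J _ assms(2)]
    by (simp add: mult.commute)
qed

lemma complex_mat_triangularizable:
  fixes M :: "complex mat"
  assumes M: "M \<in> carrier_mat d d"
  obtains J P Q where "similar_mat_wit M J P Q" "upper_triangular J"
proof -
  obtain as where "char_poly M = (\<Prod>a\<leftarrow>as. [:- a, 1:])"
    using char_poly_factorized[OF M] by auto
  from jordan_nf_exists[OF M this] obtain n_as where "jordan_nf M n_as" ..
  then obtain P Q where wit: "similar_mat_wit M (jordan_matrix n_as) P Q"
    unfolding jordan_nf_def similar_mat_def by auto
  have "upper_triangular (jordan_matrix n_as)"
    using jordan_matrix_upper_triangular by (auto simp: upper_triangular_def)
  with wit show ?thesis by (rule that)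
qed

lemma root_of_unity_pow_pred_eq_cnj:
  fixes t :: complex
  assumes "t ^ k = 1" "k > 0"
  shows "t ^ (k - 1) = cnj t"
proof -
  obtain m where k: "k = Suc m" using assms(2) by (cases k) auto
  have "norm t ^ k = 1 ^ k" using assms(1) by (metis norm_one norm_power power_one)
  then have "norm t = 1"
    using assms(2) by (simp add: power_eq_imp_eq_base)
  then have "t * cnj t = 1"
    using complex_norm_square[of t] by simp
  then have "t ^ m = (t ^ m * t) * cnj t" by (simp add: mult.assoc)
  also have "t ^ m * t = 1" using assms(1) k by (simp add: mult.commute)
  finally show ?thesis using k by simp
qed

(* After triangularization, the diagonal entries are k-th roots of unity, so their
   (k-1)-th powers are their conjugates. *)
lemma mat_trace_pow_pred_eq_cnj:
  fixes M :: "complex mat"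
  assumes M: "M \<in> carrier_mat d d" and k: "k > 0" and Mk: "M ^\<^sub>m k = 1\<^sub>m d"
  shows "mat_trace (M ^\<^sub>m (k - 1)) = cnj (mat_trace M)"
proof -
  obtain J P Q where wit: "similar_mat_wit M J P Q" and tri: "upper_triangular J"
    using complex_mat_triangularizable[OF M] .
  have J: "J \<in> carrier_mat d d"
    using similar_mat_witD2[OF M wit] by auto
  note J_pow = upper_triangular_pow[OF J tri]
  have trace_pow: "mat_trace (M ^\<^sub>m r) = (\<Sum>i<d. J $$ (i,i) ^ r)" for r
    using mat_trace_similar_mat_wit[OF similar_mat_wit_pow[OF wit]] J J_pow[of r]
    by (simp add: mat_trace_def)
  have "J ^\<^sub>m k = 1\<^sub>m d"
    using similar_mat_wit_pow[OF similar_mat_wit_sym[OF wit], of k] Mk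
    by (auto simp: similar_mat_wit_def Let_def)
  then have "J $$ (i,i) ^ k = 1" if "i < d" for i
    using J_pow[of k] that by auto
  then have "J $$ (i,i) ^ (k - 1) = cnj (J $$ (i,i))" if "i < d" for i
    using root_of_unity_pow_pred_eq_cnj k that by blast
  then show ?thesis
    using trace_pow[of "k - 1"] trace_pow[of 1] by simp
qed

definition is_representation ::
    "(nat \<Rightarrow> nat) set \<Rightarrow> nat \<Rightarrow> ((nat \<Rightarrow> nat) \<Rightarrow> complex mat) \<Rightarrow> bool" where
  "is_representation G d \<rho> \<longleftrightarrow>
     (\<forall>g\<in>G. \<rho> g \<in> carrier_mat d d) \<and> \<rho> id = 1\<^sub>m d \<and>
     (\<forall>g\<in>G. \<forall>h\<in>G. \<rho> (g \<circ> h) = \<rho> g * \<rho> h)"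

lemma is_character_iff_representation:
  "is_character G \<chi> \<longleftrightarrow>
     (\<exists>d \<rho>. is_representation G d \<rho> \<and> (\<forall>g\<in>G. \<chi> g = mat_trace (\<rho> g)))"
  unfolding is_character_def is_representation_def by blast

lemma perm_subgroup_funpow_closed:
  assumes "is_perm_subgroup n G" "g \<in> G"
  shows "g ^^ m \<in> G"
  using assms by (induction m) (auto simp: is_perm_subgroup_def)

lemma representation_funpow:
  assumes G: "is_perm_subgroup n G" and \<rho>: "is_representation G d \<rho>" and g: "g \<in> G"
  shows "\<rho> (g ^^ m) = \<rho> g ^\<^sub>m m"
proof (induction m)
  case 0
  have "\<rho> g \<in> carrier_mat d d" "\<rho> id = 1\<^sub>m d"
    using \<rho> g by (auto simp: is_representation_def)
  then show ?case by (simp add: id_def)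
next
  case (Suc m)
  have "\<rho> (g ^^ Suc m) = \<rho> (g ^^ m \<circ> g)" by (simp only: funpow_Suc_right)
  also have "\<dots> = \<rho> (g ^^ m) * \<rho> g"
    using \<rho> perm_subgroup_funpow_closed[OF G g] g by (simp add: is_representation_def)
  also have "\<dots> = \<rho> g ^\<^sub>m Suc m"
    using Suc.IH by simp
  finally show ?case .
qed

lemma inv_eq_funpow_pred:
  assumes "inj f" "f ^^ k = id" "k > 0"
  shows "Hilbert_Choice.inv f = f ^^ (k - 1)"
proof -
  obtain m where k: "k = Suc m" using assms(3) by (cases k) auto
  have "f \<circ> f ^^ m = id"
    using assms(2) unfolding k funpow.simps(2) .
  then have "Hilbert_Choice.inv f = Hilbert_Choice.inv f \<circ> (f \<circ> f ^^ m)"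
    by simp
  also have "\<dots> = f ^^ m"
    using assms(1) by (simp add: o_assoc)
  finally show ?thesis using k by simp
qed

(* g has finite order k, so rho g ^ k = 1 and inv g = g ^^ (k - 1). *)
lemma character_inv:
  assumes G: "is_perm_subgroup n G" and \<chi>: "is_character G \<chi>" and g: "g \<in> G"
  shows "\<chi> (Hilbert_Choice.inv g) = cnj (\<chi> g)"
proof -
  obtain d \<rho> where \<rho>: "is_representation G d \<rho>" and \<chi>_tr: "\<forall>g\<in>G. \<chi> g = mat_trace (\<rho> g)"
    using \<chi> unfolding is_character_iff_representation by blast
  have g_perm: "g permutes {1..n}" using G g by (auto simp: is_perm_subgroup_def)
  obtain k where gk: "g ^^ k = id" and k: "k > 0"
    using permutation_is_nilpotent[OF permutes_imp_permutation[OF _ g_perm]] by auto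
  have inv_g: "Hilbert_Choice.inv g = g ^^ (k - 1)"
    using inv_eq_funpow_pred[OF permutes_inj[OF g_perm] gk k] .
  have "\<rho> g ^\<^sub>m k = 1\<^sub>m d"
    using representation_funpow[OF G \<rho> g, of k] gk \<rho> by (simp add: is_representation_def)
  then have "mat_trace (\<rho> g ^\<^sub>m (k - 1)) = cnj (mat_trace (\<rho> g))"
    using \<rho> g k by (intro mat_trace_pow_pred_eq_cnj) (auto simp: is_representation_def)
  then show ?thesis
    using inv_g representation_funpow[OF G \<rho> g] perm_subgroup_funpow_closed[OF G g] \<chi>_tr g
    by simp
qed

lemma perm_mat_eq:
  assumes "\<theta> permutes S"
  shows "perm_mat \<theta> i j = (if \<theta> j = i then 1 else 0)"
  unfolding perm_mat_def using permutes_inv_eq[OF assms] by simp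

lemma Fix_inv_comp:
  assumes "\<theta> permutes S"
  shows "Fix n (Hilbert_Choice.inv \<theta> \<circ> \<sigma>) = {j \<in> {1..n}. \<sigma> j = \<theta> j}"
  unfolding Fix_def using permutes_inv_eq[OF assms] by auto

lemma gen_matrix_fun_reindex_inv:
  assumes G: "is_perm_subgroup n G"
  shows "gen_matrix_fun n G \<chi> A = (\<Sum>\<sigma>\<in>G. \<chi> (Hilbert_Choice.inv \<sigma>) * (\<Prod>j\<in>{1..n}. A (\<sigma> j) j))"
proof -
  have perm: "\<sigma> permutes {1..n}" and inv_mem: "Hilbert_Choice.inv \<sigma> \<in> G" if "\<sigma> \<in> G" for \<sigma>
    using G that by (auto simp: is_perm_subgroup_def)
  have inv_inv: "Hilbert_Choice.inv (Hilbert_Choice.inv \<sigma>) = \<sigma>" if "\<sigma> \<in> G" for \<sigma>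
    using permutes_inv_inv[OF perm[OF that]] .
  have "gen_matrix_fun n G \<chi> A = (\<Sum>\<sigma>\<in>G. \<chi> (Hilbert_Choice.inv \<sigma>) * (\<Prod>i\<in>{1..n}. A i (Hilbert_Choice.inv \<sigma> i)))"
    unfolding gen_matrix_fun_def
    by (rule sum.reindex_bij_witness[of _ Hilbert_Choice.inv Hilbert_Choice.inv]) (simp_all add: inv_mem inv_inv)
  also have "\<dots> = (\<Sum>\<sigma>\<in>G. \<chi> (Hilbert_Choice.inv \<sigma>) * (\<Prod>j\<in>{1..n}. A (\<sigma> j) j))"
  proof (rule sum.cong[OF refl])
    fix \<sigma> assume "\<sigma> \<in> G"
    with perm have \<sigma>: "\<sigma> permutes {1..n}" .
    have "(\<Prod>i\<in>{1..n}. A i (Hilbert_Choice.inv \<sigma> i))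
        = (\<Prod>j\<in>{1..n}. A (\<sigma> j) (Hilbert_Choice.inv \<sigma> (\<sigma> j)))"
      by (rule prod.reindex_bij_betw[OF permutes_imp_bij[OF \<sigma>], symmetric])
    also have "\<dots> = (\<Prod>j\<in>{1..n}. A (\<sigma> j) j)"
      using permutes_inverses(2)[OF \<sigma>] by simp
    finally have "(\<Prod>i\<in>{1..n}. A i (Hilbert_Choice.inv \<sigma> i)) = (\<Prod>j\<in>{1..n}. A (\<sigma> j) j)" .
    then show "\<chi> (Hilbert_Choice.inv \<sigma>) * (\<Prod>i\<in>{1..n}. A i (Hilbert_Choice.inv \<sigma> i)) = \<chi> (Hilbert_Choice.inv \<sigma>) * (\<Prod>j\<in>{1..n}. A (\<sigma> j) j)"
      by simp
  qed
  finally show ?thesis .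
qed

lemma card_Fix_le: "card (Fix n \<pi>) \<le> n"
proof -
  have "Fix n \<pi> \<subseteq> {1..n}" by (auto simp: Fix_def)
  from card_mono[OF _ this] show ?thesis by simp
qed

lemma prod_perm_mat_comb_notin_Xset:
  assumes \<theta>: "\<theta> permutes {1..n}" and \<tau>: "\<tau> permutes {1..n}"
    and "\<sigma> permutes {1..n}" "\<sigma> \<notin> Xset n \<theta> \<tau>"
  shows "(\<Prod>j\<in>{1..n}. a * perm_mat \<theta> (\<sigma> j) j + b * perm_mat \<tau> (\<sigma> j) j) = 0"
proof -
  obtain j where j: "j \<in> {1..n}" "\<sigma> j \<noteq> \<theta> j" "\<sigma> j \<noteq> \<tau> j"
    using assms(3,4) unfolding Xset_def by blast
  then have "a * perm_mat \<theta> (\<sigma> j) j + b * perm_mat \<tau> (\<sigma> j) j = 0"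
    by (simp add: perm_mat_eq[OF \<theta>] perm_mat_eq[OF \<tau>])
  with j(1) show ?thesis by (intro prod_zero) auto
qed

lemma prod_perm_mat_comb_Xset:
  fixes a b :: complex
  assumes \<theta>: "\<theta> permutes {1..n}" and \<tau>: "\<tau> permutes {1..n}" and \<sigma>: "\<sigma> \<in> Xset n \<theta> \<tau>"
  shows "(\<Prod>j\<in>{1..n}. a * perm_mat \<theta> (\<sigma> j) j + b * perm_mat \<tau> (\<sigma> j) j)
       = (a + b) ^ card (Fix n (Hilbert_Choice.inv \<theta> \<circ> \<tau>))
         * a ^ (card (Fix n (Hilbert_Choice.inv \<theta> \<circ> \<sigma>)) - card (Fix n (Hilbert_Choice.inv \<theta> \<circ> \<tau>)))
         * b ^ (n - card (Fix n (Hilbert_Choice.inv \<theta> \<circ> \<sigma>)))"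
proof -
  define f where "f j = a * perm_mat \<theta> (\<sigma> j) j + b * perm_mat \<tau> (\<sigma> j) j" for j
  define E where "E = Fix n (Hilbert_Choice.inv \<theta> \<circ> \<tau>)"
  define S where "S = Fix n (Hilbert_Choice.inv \<theta> \<circ> \<sigma>)"
  have \<sigma>_choice: "\<sigma> j = \<theta> j \<or> \<sigma> j = \<tau> j" if "j \<in> {1..n}" for j
    using \<sigma> that unfolding Xset_def by blast
  have E: "E = {j \<in> {1..n}. \<tau> j = \<theta> j}" and S: "S = {j \<in> {1..n}. \<sigma> j = \<theta> j}"
    unfolding E_def S_def by (simp_all add: Fix_inv_comp[OF \<theta>])
  have ES: "E \<subseteq> S"
  proof
    fix j assume "j \<in> E"
    then have "j \<in> {1..n}" "\<tau> j = \<theta> j" by (auto simp: E)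
    then show "j \<in> S" using \<sigma>_choice[of j] by (auto simp: S)
  qed
  have S_sub: "S \<subseteq> {1..n}"
    unfolding S by blast
  have fin: "finite S" "finite E"
    using finite_subset[OF S_sub] finite_subset[OF ES] by auto
  have f_eq: "f j = (if \<theta> j = \<sigma> j then a else 0) + (if \<tau> j = \<sigma> j then b else 0)" for j
    unfolding f_def perm_mat_eq[OF \<theta>] perm_mat_eq[OF \<tau>] by simp
  have "prod f {1..n} = prod f ({1..n} - S) * (prod f (S - E) * prod f E)"
    using prod.subset_diff[OF S_sub, of f] prod.subset_diff[OF ES fin(1), of f] by simp
  also have "prod f ({1..n} - S) = prod (\<lambda>_. b) ({1..n} - S)"
  proof (rule prod.cong[OF refl])
    fix j assume "j \<in> {1..n} - S"
    with \<sigma>_choice[of j] have "\<sigma> j \<noteq> \<theta> j" "\<sigma> j = \<tau> j" by (auto simp: S)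
    then show "f j = b" by (simp add: f_eq)
  qed
  also have "prod f (S - E) = prod (\<lambda>_. a) (S - E)"
    by (rule prod.cong) (auto simp: f_eq S E)
  also have "prod f E = prod (\<lambda>_. a + b) E"
  proof (rule prod.cong[OF refl])
    fix j assume "j \<in> E"
    with ES have "\<sigma> j = \<theta> j" "\<tau> j = \<theta> j" by (auto simp: E S)
    then show "f j = a + b" by (simp add: f_eq)
  qed
  finally have "prod f {1..n} = b ^ (n - card S) * (a ^ (card S - card E) * (a + b) ^ card E)"
    using card_Diff_subset[OF fin(1) S_sub] card_Diff_subset[OF fin(2) ES] by simp
  then show ?thesis
    unfolding f_def E_def S_def by (simp add: mult_ac)
qed

lemma sum_perm_mat_comb_restrict_Xset:
  assumes \<theta>: "\<theta> permutes {1..n}" and \<tau>: "\<tau> permutes {1..n}"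
    and G: "G \<subseteq> {\<sigma>. \<sigma> permutes {1..n}}"
  shows "(\<Sum>\<sigma>\<in>G. c \<sigma> * (\<Prod>j\<in>{1..n}. a * perm_mat \<theta> (\<sigma> j) j + b * perm_mat \<tau> (\<sigma> j) j))
       = (\<Sum>\<sigma>\<in>Xset n \<theta> \<tau> \<inter> G. c \<sigma> * (\<Prod>j\<in>{1..n}. a * perm_mat \<theta> (\<sigma> j) j + b * perm_mat \<tau> (\<sigma> j) j))"
proof (rule sum.mono_neutral_right)
  show "finite G"
    using G finite_permutations finite_subset by blast
  show "\<forall>\<sigma>\<in>G - Xset n \<theta> \<tau> \<inter> G.
          c \<sigma> * (\<Prod>j\<in>{1..n}. a * perm_mat \<theta> (\<sigma> j) j + b * perm_mat \<tau> (\<sigma> j) j) = 0"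
  proof
    fix \<sigma> assume "\<sigma> \<in> G - Xset n \<theta> \<tau> \<inter> G"
    with G have "\<sigma> permutes {1..n}" "\<sigma> \<notin> Xset n \<theta> \<tau>" by auto
    from prod_perm_mat_comb_notin_Xset[OF \<theta> \<tau> this, of a b]
    show "c \<sigma> * (\<Prod>j\<in>{1..n}. a * perm_mat \<theta> (\<sigma> j) j + b * perm_mat \<tau> (\<sigma> j) j) = 0"
      by simp
  qed
qed auto

theorem theorem3p2:
  fixes n :: nat and G :: "(nat \<Rightarrow> nat) set" and \<chi> :: "(nat \<Rightarrow> nat) \<Rightarrow> complex"
    and \<theta> \<tau> :: "nat \<Rightarrow> nat" and a b :: complex
  assumes "is_perm_subgroup n G"
    and "is_character G \<chi>"
    and "\<theta> permutes {1..n}" and "\<tau> permutes {1..n}"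
  shows "gen_matrix_fun n G \<chi> (\<lambda>i j. a * perm_mat \<theta> i j + b * perm_mat \<tau> i j)
       = (a + b) ^ card (Fix n (Hilbert_Choice.inv \<theta> \<circ> \<tau>)) *
         (\<Sum>\<sigma>\<in>Xset n \<theta> \<tau> \<inter> G.
            cnj (\<chi> \<sigma>) * a ^ (n - (n - card (Fix n (Hilbert_Choice.inv \<theta> \<circ> \<sigma>))) - card (Fix n (Hilbert_Choice.inv \<theta> \<circ> \<tau>)))
              * b ^ (n - card (Fix n (Hilbert_Choice.inv \<theta> \<circ> \<sigma>))))"
proof -
  note G = assms(1) and \<theta> = assms(3) and \<tau> = assms(4)
  let ?M = "\<lambda>i j. a * perm_mat \<theta> i j + b * perm_mat \<tau> i j"
  let ?F = "card (Fix n (Hilbert_Choice.inv \<theta> \<circ> \<tau>))"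
  let ?S = "\<lambda>\<sigma>. card (Fix n (Hilbert_Choice.inv \<theta> \<circ> \<sigma>))"
  have "gen_matrix_fun n G \<chi> ?M = (\<Sum>\<sigma>\<in>G. cnj (\<chi> \<sigma>) * (\<Prod>j\<in>{1..n}. ?M (\<sigma> j) j))"
    using character_inv[OF G assms(2)] by (simp add: gen_matrix_fun_reindex_inv[OF G])
  also have "\<dots> = (\<Sum>\<sigma>\<in>Xset n \<theta> \<tau> \<inter> G. cnj (\<chi> \<sigma>) * (\<Prod>j\<in>{1..n}. ?M (\<sigma> j) j))"
    using G by (intro sum_perm_mat_comb_restrict_Xset[OF \<theta> \<tau>]) (auto simp: is_perm_subgroup_def)
  also have "\<dots> = (\<Sum>\<sigma>\<in>Xset n \<theta> \<tau> \<inter> G.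
                    cnj (\<chi> \<sigma>) * ((a + b) ^ ?F * a ^ (?S \<sigma> - ?F) * b ^ (n - ?S \<sigma>)))"
    by (rule sum.cong[OF refl], subst prod_perm_mat_comb_Xset[OF \<theta> \<tau>]) auto
  finally show ?thesis
    by (simp add: sum_distrib_left diff_diff_cancel[OF card_Fix_le] mult_ac)
qed

end
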